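(* Let $E$ be a real Hilbert space with $\dim(E)\ge2$, $h\in E$ a unit vector, $H^+=\{x\in E\mid (h,x)>0\}$, and define $\preceq$ on $H^+$ by $x\preceq y\iff\|x-y_\perp\|\le y_h$. Then (a) every finite subset of $H^+$ has a right bound in $(H^+,\preceq)$; (b) a pair $x,y\in H^+$ has a left bound in $(H^+,\preceq)$ if and only if $\|x_\perp-y_\perp\|<x_h+y_h$.
   Context: For $x\in E$, $x_h=(h,x)$ and $x_\perp=x-(h,x)h$. A right bound of $P$ is an $s\in H^+$ with $p\preceq s$ for all $p\in P$; a left bound is an $s\in H^+$ with $s\preceq p$ for all $p\in P$. *)

theory Defs
  imports "HOL-Analysis.Analysis"
begin

definition hcomp :: "'a::real_inner \<Rightarrow> 'a \<Rightarrow> real" where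
  "hcomp h x = h \<bullet> x"

definition hperp :: "'a::real_inner \<Rightarrow> 'a \<Rightarrow> 'a" where
  "hperp h x = x - (h \<bullet> x) *\<^sub>R h"

definition Hplus :: "'a::real_inner \<Rightarrow> 'a set" where
  "Hplus h = {x. h \<bullet> x > 0}"

definition hprec :: "'a::real_inner \<Rightarrow> 'a \<Rightarrow> 'a \<Rightarrow> bool" where
  "hprec h x y \<longleftrightarrow> x \<in> Hplus h \<and> y \<in> Hplus h \<and> norm (x - hperp h y) \<le> hcomp h y"

definition right_bound :: "'a::real_inner \<Rightarrow> 'a set \<Rightarrow> 'a \<Rightarrow> bool" where
  "right_bound h P s \<longleftrightarrow> s \<in> Hplus h \<and> (\<forall>p\<in>P. hprec h p s)"

definition left_bound :: "'a::real_inner \<Rightarrow> 'a set \<Rightarrow> 'a \<Rightarrow> bool" where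
  "left_bound h P s \<longleftrightarrow> s \<in> Hplus h \<and> (\<forall>p\<in>P. hprec h s p)"

end

theory Submission
  imports Defs
begin

text \<open>Writing a point as \<open>x = x\<^sub>\<bottom> + x\<^sub>h h\<close>, Pythagoras turns \<open>s \<preceq> x\<close> into
  \<open>\<parallel>s\<^sub>\<bottom> - x\<^sub>\<bottom>\<parallel>\<^sup>2 + s\<^sub>h\<^sup>2 \<le> x\<^sub>h\<^sup>2\<close>: the points below \<open>x\<close> form the open upper half of a ball of
  radius \<open>x\<^sub>h\<close> centred at \<open>x\<^sub>\<bottom>\<close>. A large multiple of \<open>h\<close> therefore dominates any finite set.
  Two such half-balls meet iff their centres are closer than the sum of the radii; a common point
  is found above the point dividing \<open>[x\<^sub>\<bottom>, y\<^sub>\<bottom>]\<close> in the ratio \<open>x\<^sub>h : y\<^sub>h\<close>, at a small positive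
  height.\<close>

lemma inner_hperp_eq_0: "norm h = 1 \<Longrightarrow> h \<bullet> hperp h x = 0"
  by (simp add: hperp_def inner_diff_right norm_eq_1)

lemma hperp_add_scaleR:
  assumes "norm h = 1" "h \<bullet> z = 0"
  shows "hperp h (z + c *\<^sub>R h) = z" and "hcomp h (z + c *\<^sub>R h) = c"
  using assms by (simp_all add: hperp_def hcomp_def inner_add_right norm_eq_1)

lemma norm_diff_hperp_squared:
  assumes "norm h = 1"
  shows "(norm (s - hperp h x))\<^sup>2 = (norm (hperp h s - hperp h x))\<^sup>2 + (hcomp h s)\<^sup>2"
proof -
  have "h \<bullet> (hperp h s - hperp h x) = 0"
    using assms by (simp add: inner_diff_right inner_hperp_eq_0)
  then have "orthogonal (hperp h s - hperp h x) (hcomp h s *\<^sub>R h)"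
    by (simp add: orthogonal_def inner_commute)
  moreover have "s - hperp h x = (hperp h s - hperp h x) + hcomp h s *\<^sub>R h"
    by (simp add: hperp_def hcomp_def)
  ultimately have "(norm (s - hperp h x))\<^sup>2 =
      (norm (hperp h s - hperp h x))\<^sup>2 + (norm (hcomp h s *\<^sub>R h))\<^sup>2"
    by (simp only: norm_add_Pythagorean)
  then show ?thesis
    using assms by simp
qed

lemma hprec_iff:
  assumes "norm h = 1"
  shows "hprec h s x \<longleftrightarrow> s \<in> Hplus h \<and> x \<in> Hplus h \<and>
           (norm (hperp h s - hperp h x))\<^sup>2 + (hcomp h s)\<^sup>2 \<le> (hcomp h x)\<^sup>2"
proof -
  have "norm (s - hperp h x) \<le> hcomp h x \<longleftrightarrow>
      (norm (hperp h s - hperp h x))\<^sup>2 + (hcomp h s)\<^sup>2 \<le> (hcomp h x)\<^sup>2"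
    if "x \<in> Hplus h"
  proof -
    have "hcomp h x \<ge> 0"
      using that by (simp add: Hplus_def hcomp_def)
    then have "norm (s - hperp h x) \<le> hcomp h x \<longleftrightarrow> (norm (s - hperp h x))\<^sup>2 \<le> (hcomp h x)\<^sup>2"
      by (simp add: power2_le_iff_abs_le)
    then show ?thesis
      by (simp only: norm_diff_hperp_squared[OF assms, of s x])
  qed
  then show ?thesis
    unfolding hprec_def by blast
qed

lemma hprec_scaleR_h_iff:
  assumes "norm h = 1" "R > 0"
  shows "hprec h p (R *\<^sub>R h) \<longleftrightarrow> p \<in> Hplus h \<and> norm p \<le> R"
  using hperp_add_scaleR[OF assms(1), of 0 R] assms
  by (auto simp: hprec_def Hplus_def norm_eq_1)

lemma right_bound_finite:
  assumes "norm h = 1" "finite P" "P \<subseteq> Hplus h"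
  shows "\<exists>s. right_bound h P s"
proof -
  define R where "R = 1 + (\<Sum>p\<in>P. norm p)"
  have "R > 0"
    unfolding R_def by (smt (verit) sum_nonneg norm_ge_zero)
  moreover have "norm p \<le> R" if "p \<in> P" for p
    using member_le_sum[of p P norm] assms(2) that by (simp add: R_def)
  ultimately have "right_bound h P (R *\<^sub>R h)"
    using assms by (auto simp: right_bound_def hprec_scaleR_h_iff Hplus_def norm_eq_1)
  then show ?thesis ..
qed

lemma hprec_imp_norm_hperp_less:
  assumes "norm h = 1" "hprec h s x"
  shows "norm (hperp h s - hperp h x) < hcomp h x"
proof -
  have "hcomp h s > 0" "hcomp h x > 0"
    using assms(2) by (auto simp: hprec_def Hplus_def hcomp_def)
  moreover have "(norm (hperp h s - hperp h x))\<^sup>2 + (hcomp h s)\<^sup>2 \<le> (hcomp h x)\<^sup>2"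
    using assms hprec_iff by blast
  ultimately have "(norm (hperp h s - hperp h x))\<^sup>2 < (hcomp h x)\<^sup>2"
    by (smt (verit) zero_less_power2)
  with \<open>hcomp h x > 0\<close> show ?thesis
    using power_less_imp_less_base by fastforce
qed

lemma left_bound_pair_imp_norm_hperp_less:
  assumes "norm h = 1" "left_bound h {x, y} s"
  shows "norm (hperp h x - hperp h y) < hcomp h x + hcomp h y"
proof (rule norm_diff_triangle_less)
  show "norm (hperp h x - hperp h s) < hcomp h x"
    using assms hprec_imp_norm_hperp_less norm_minus_commute
    by (metis insertI1 left_bound_def)
  show "norm (hperp h s - hperp h y) < hcomp h y"
    using assms hprec_imp_norm_hperp_less by (meson insertCI left_bound_def)
qed

lemma hprec_above_iff:
  assumes "norm h = 1" "h \<bullet> z = 0" "c > 0"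
  shows "hprec h (z + c *\<^sub>R h) x \<longleftrightarrow>
           x \<in> Hplus h \<and> (norm (z - hperp h x))\<^sup>2 + c\<^sup>2 \<le> (hcomp h x)\<^sup>2"
  using assms by (simp add: hprec_iff hperp_add_scaleR Hplus_def flip: hcomp_def)

lemma power2_mult_add_power2_sqrt_le:
  fixes e m r :: real
  assumes "0 \<le> m" "m \<le> e" "0 \<le> r" "r \<le> 1"
  shows "(e * r)\<^sup>2 + (m * sqrt (1 - r\<^sup>2))\<^sup>2 \<le> e\<^sup>2"
proof -
  have "r\<^sup>2 \<le> 1"
    using assms by (simp add: abs_square_le_1)
  moreover have "m\<^sup>2 \<le> e\<^sup>2"
    using assms by (simp add: power_mono)
  ultimately have "(e * r)\<^sup>2 + m\<^sup>2 * (1 - r\<^sup>2) \<le> (e * r)\<^sup>2 + e\<^sup>2 * (1 - r\<^sup>2)"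
    by (simp add: mult_right_mono)
  also have "\<dots> = e\<^sup>2"
    by (simp add: algebra_simps)
  finally show ?thesis
    using \<open>r\<^sup>2 \<le> 1\<close> by (simp add: power_mult_distrib)
qed

lemma left_bound_pair_exists:
  assumes unit: "norm h = 1" and "x \<in> Hplus h" "y \<in> Hplus h"
    and close: "norm (hperp h x - hperp h y) < hcomp h x + hcomp h y"
  shows "\<exists>s. left_bound h {x, y} s"
proof -
  define a where "a = hcomp h x"
  define b where "b = hcomp h y"
  have "a > 0" "b > 0"
    using assms(2,3) by (simp_all add: a_def b_def hcomp_def Hplus_def)
  define r where "r = norm (hperp h x - hperp h y) / (a + b)"
  have r: "0 \<le> r" "r \<le> 1" "r < 1"
    using \<open>a > 0\<close> \<open>b > 0\<close> close by (simp_all add: r_def a_def b_def)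
  define z where "z = hperp h x + (a / (a + b)) *\<^sub>R (hperp h y - hperp h x)"
  define c where "c = min a b * sqrt (1 - r\<^sup>2)"
  have z: "h \<bullet> z = 0"
    using unit by (simp add: z_def inner_add_right inner_diff_right inner_hperp_eq_0)
  have c: "c > 0"
    using \<open>a > 0\<close> \<open>b > 0\<close> r by (simp add: c_def abs_square_less_1)
  have "norm (z - hperp h x) = a * r"
    using \<open>a > 0\<close> \<open>b > 0\<close> by (simp add: z_def r_def norm_minus_commute)
  then have "(norm (z - hperp h x))\<^sup>2 + c\<^sup>2 \<le> a\<^sup>2"
    using power2_mult_add_power2_sqrt_le[of "min a b" a r] \<open>a > 0\<close> \<open>b > 0\<close> r by (simp add: c_def)
  then have "hprec h (z + c *\<^sub>R h) x"
    using assms(2) by (simp add: hprec_above_iff[OF unit z c] a_def)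
  have "1 - a / (a + b) = b / (a + b)"
    using \<open>a > 0\<close> \<open>b > 0\<close> by (simp add: field_simps)
  moreover have "z - hperp h y = (1 - a / (a + b)) *\<^sub>R (hperp h x - hperp h y)"
    by (simp add: z_def algebra_simps)
  ultimately have "z - hperp h y = (b / (a + b)) *\<^sub>R (hperp h x - hperp h y)"
    by simp
  then have "norm (z - hperp h y) = b * r"
    using \<open>a > 0\<close> \<open>b > 0\<close> by (simp add: r_def)
  then have "(norm (z - hperp h y))\<^sup>2 + c\<^sup>2 \<le> b\<^sup>2"
    using power2_mult_add_power2_sqrt_le[of "min a b" b r] \<open>a > 0\<close> \<open>b > 0\<close> r by (simp add: c_def)
  then have "hprec h (z + c *\<^sub>R h) y"
    using assms(3) by (simp add: hprec_above_iff[OF unit z c] b_def)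
  moreover have "z + c *\<^sub>R h \<in> Hplus h"
    using \<open>hprec h (z + c *\<^sub>R h) y\<close> by (simp add: hprec_def)
  ultimately show ?thesis
    using \<open>hprec h (z + c *\<^sub>R h) x\<close> by (auto simp: left_bound_def)
qed

theorem mainTheorem18:
  fixes h :: "'a::{real_inner, complete_space}"
  assumes dim2: "\<exists>u v::'a. u \<noteq> v \<and> independent {u, v}"
    and unit: "norm h = 1"
  shows "(\<forall>P. finite P \<and> P \<subseteq> Hplus h \<longrightarrow> (\<exists>s. right_bound h P s))
       \<and> (\<forall>x\<in>Hplus h. \<forall>y\<in>Hplus h.
            (\<exists>s. left_bound h {x, y} s) \<longleftrightarrow>
            norm (hperp h x - hperp h y) < hcomp h x + hcomp h y)"
proof (intro conjI allI impI ballI iffI)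
  fix P :: "'a set"
  assume "finite P \<and> P \<subseteq> Hplus h"
  then show "\<exists>s. right_bound h P s"
    by (simp add: right_bound_finite[OF unit])
next
  fix x y
  assume "\<exists>s. left_bound h {x, y} s"
  then show "norm (hperp h x - hperp h y) < hcomp h x + hcomp h y"
    using left_bound_pair_imp_norm_hperp_less[OF unit] by (elim exE)
next
  fix x y
  assume "x \<in> Hplus h" "y \<in> Hplus h" "norm (hperp h x - hperp h y) < hcomp h x + hcomp h y"
  then show "\<exists>s. left_bound h {x, y} s"
    by (rule left_bound_pair_exists[OF unit])
qed

end
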